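(* Let $T$ take values in $\mathcal{S}\subseteq\mathbb{N}$, $q_t=\mathbb{P}(T=t)$, with $\mathbb{E}[T^\delta]<\infty$ for some $\delta>0$. Fix $\tau\in(0,1)$, a kernel $\kappa:\mathcal{S}^2\to[0,\infty)$, and two vertex types $t,s\in\mathcal{S}$ that are stable at tolerance $\tau$; set $\Lambda_n(t,s)=\lfloor nq_tq_s\kappa(t,s)\rfloor$. Let $\kappa_n'$ be another kernel for which there exist $\alpha\in(1/2-\tau/2,1/2)$ and $C>0$ with $$\kappa_n'(t,s)\le\kappa(t,s)-\frac{Cn^{-1/2+\alpha}}{\sqrt{q_tq_s}},$$ and let $A_n$ be the arc-to-vertex-type function of $\texttt{IRD}_n(T,\kappa_n')$. Then for all sufficiently large $n$, $\mathbb{P}(A_n(t,s)>\Lambda_n(t,s))\le2\exp(-\log(n)^2/2)$.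
   Context: $\texttt{IRD}_n(T,\kappa_n')$: vertex set $[n]$, types $T_v$ i.i.d. as $T$, each arc $(v,w)$, $v\ne w$, present independently with probability $\min\{\kappa_n'(T_v,T_w)/n,1\}$. Arc-to-vertex-type function: $A_n(t,s)=|\{(v,w)\text{ arc}:T_v=t,T_w=s\}|$. Stability: $u_n^\uparrow(\tau)=\inf\{t:q_s<n^{-1+\tau}\ \forall s\ge t\}$; type $t$ is stable at tolerance $\tau$ if $t<u_n^\uparrow(\tau)$. *)

theory Defs
  imports "HOL-Probability.Probability"
begin

text \<open>Type distribution: a pmf p on the naturals, q_t = pmf p t.\<close>

definition u_up :: "nat pmf \<Rightarrow> real \<Rightarrow> nat \<Rightarrow> nat" where
  "u_up p \<tau> n = Inf {u::nat. \<forall>s\<ge>u. pmf p s < real n powr (-1 + \<tau>)}"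

definition stable :: "nat pmf \<Rightarrow> real \<Rightarrow> nat \<Rightarrow> nat \<Rightarrow> bool" where
  "stable p \<tau> n t \<longleftrightarrow> t < u_up p \<tau> n"

definition IRD :: "nat \<Rightarrow> nat pmf \<Rightarrow> (nat \<Rightarrow> nat \<Rightarrow> real)
                     \<Rightarrow> ((nat \<Rightarrow> nat) \<times> (nat \<times> nat \<Rightarrow> bool)) pmf" where
  "IRD n p \<kappa> =
     do { T \<leftarrow> Pi_pmf {1..n} 0 (\<lambda>_. p);
          E \<leftarrow> Pi_pmf {(v, w). v \<in> {1..n} \<and> w \<in> {1..n} \<and> v \<noteq> w} False
                 (\<lambda>(v, w). bernoulli_pmf (min (\<kappa> (T v) (T w) / real n) 1));
          return_pmf (T, E) }"

definition arc_count :: "nat \<Rightarrow> (nat \<Rightarrow> nat) \<times> (nat \<times> nat \<Rightarrow> bool) \<Rightarrow> nat \<Rightarrow> nat \<Rightarrow> nat" where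
  "arc_count n G t s = card {(v, w). v \<in> {1..n} \<and> w \<in> {1..n} \<and> v \<noteq> w \<and>
                                  snd G (v, w) \<and> fst G v = t \<and> fst G w = s}"

end

(* Conditionally on the types, A_n(t,s) is a sum of independent Bernoulli(kappa'_n(t,s)/n)
   indicators over at most N_t N_s vertex pairs, where N_t is the number of vertices of type t.
   Chernoff bounds with parameter n^(-1/2) show that N_t <= n q_t + n^(1/2 + alpha/2) except with
   probability exp(1 - n^(alpha/2)), and that on this event A_n(t,s) >= n q_t q_s kappa(t,s) has
   probability at most exp(-C sqrt(q_t q_s) n^alpha + O(n^(alpha/2))): the hypothesis on kappa'_n
   puts the conditional mean C sqrt(q_t q_s) n^(1/2 + alpha) below n q_t q_s kappa(t,s), while the
   slack in the thresholds for N_t and N_s costs only O(n^(1/2 + alpha/2)). Both bounds eventually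
   drop below exp(-log(n)^2/2). *)

theory Submission
  imports Defs "HOL-Real_Asymp.Real_Asymp"
begin

lemma measure_pmf_prob_bind:
  "measure_pmf.prob (bind_pmf M N) X = measure_pmf.expectation M (\<lambda>x. measure_pmf.prob (N x) X)"
proof -
  have "ennreal (measure_pmf.prob (bind_pmf M N) X) = (\<integral>\<^sup>+x. emeasure (N x) X \<partial>M)"
    by (simp add: measure_pmf.emeasure_eq_measure[symmetric])
  also have "\<dots> = ennreal (measure_pmf.expectation M (\<lambda>x. measure_pmf.prob (N x) X))"
    by (simp add: measure_pmf.emeasure_eq_measure nn_integral_eq_integral
        measure_pmf.integrable_const_bound[where B=1])
  finally show ?thesis by (simp add: integral_nonneg_AE)
qed

lemma measure_pmf_prob_bind_le:
  assumes "\<And>x. x \<notin> B \<Longrightarrow> measure_pmf.prob (N x) X \<le> e" and "0 \<le> e"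
  shows "measure_pmf.prob (bind_pmf M N) X \<le> e + measure_pmf.prob M B"
proof -
  have "measure_pmf.prob (bind_pmf M N) X \<le> measure_pmf.expectation M (\<lambda>x. e + indicator B x)"
    unfolding measure_pmf_prob_bind
  proof (rule integral_mono)
    show "integrable M (\<lambda>x. measure_pmf.prob (N x) X)"
      by (rule measure_pmf.integrable_const_bound[where B=1]) auto
    show "integrable M (\<lambda>x. e + indicator B x)"
      by (rule measure_pmf.integrable_const_bound[where B="e + 1"]) (use assms(2) in auto)
    show "measure_pmf.prob (N x) X \<le> e + indicator B x" for x
      using assms(1)[of x] assms(2) by (cases "x \<in> B") (auto intro: order_trans[OF measure_pmf.prob_le_1])
  qed
  also have "\<dots> = e + measure_pmf.prob M B"
    by (simp add: measure_pmf.integrable_const_bound[where B=1])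
  finally show ?thesis .
qed

lemma expectation_exp_indicator_le:
  fixes l r :: real
  assumes "measure_pmf.prob P {y. Q y} \<le> r" and "0 \<le> l"
  shows "measure_pmf.expectation P (\<lambda>y. if Q y then exp l else 1) \<le> exp (r * (exp l - 1))"
proof -
  have "(\<lambda>y. if Q y then exp l else 1) = (\<lambda>y. 1 + (exp l - 1) * indicator {y. Q y} y)"
    by (auto simp: fun_eq_iff)
  then have "measure_pmf.expectation P (\<lambda>y. if Q y then exp l else 1)
      = 1 + (exp l - 1) * measure_pmf.prob P {y. Q y}"
    by (simp add: measure_pmf.integrable_const_bound[where B=1])
  also have "\<dots> \<le> 1 + r * (exp l - 1)"
    using mult_right_mono[OF assms(1), of "exp l - 1"] assms(2) by (simp add: mult.commute)
  also have "\<dots> \<le> exp (r * (exp l - 1))"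
    by (rule exp_ge_add_one_self)
  finally show ?thesis .
qed

(* Chernoff bound: Markov's inequality for exp (l * count), whose expectation factorises over
   the independent coordinates. *)
lemma prob_Pi_pmf_card_ge_le:
  fixes l r c :: real
  assumes "finite A" and "D \<subseteq> A"
    and "\<And>x. x \<in> D \<Longrightarrow> measure_pmf.prob (P x) {y. Q y} \<le> r" and "0 < l"
  shows "measure_pmf.prob (Pi_pmf A dflt P) {f. c \<le> real (card {x\<in>D. Q (f x)})}
           \<le> exp (real (card D) * r * (exp l - 1) - l * c)"
proof -
  define g where "g = (\<lambda>x y. if x \<in> D \<and> Q y then exp l else 1)"
  let ?M = "Pi_pmf A dflt P"
  let ?X = "\<lambda>f. \<Prod>x\<in>A. g x (f x)"
  have finD: "finite D"
    using assms(1,2) by (rule finite_subset[rotated])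
  have X_eq: "?X f = exp (l * real (card {x\<in>D. Q (f x)}))" for f
  proof -
    have "?X f = (\<Prod>x\<in>{x\<in>D. Q (f x)}. exp l)"
      unfolding g_def using assms(1,2) by (intro prod.mono_neutral_cong_right) auto
    then show ?thesis
      by (simp add: exp_of_nat_mult[symmetric] mult.commute)
  qed
  have "measure_pmf.prob ?M {f. c \<le> real (card {x\<in>D. Q (f x)})}
        = measure_pmf.prob ?M {f\<in>space (measure_pmf ?M). exp (l * c) \<le> ?X f}"
    using assms(4) by (simp add: X_eq)
  also have "\<dots> \<le> measure_pmf.expectation ?M ?X / exp (l * c)"
    by (intro integral_Markov_inequality_measure
          measure_pmf.integrable_const_bound[where B="exp (l * card D)"])
       (use assms(4) in \<open>auto simp: X_eq intro!: card_mono finD mult_left_mono\<close>)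
  also have "measure_pmf.expectation ?M ?X = (\<Prod>x\<in>A. measure_pmf.expectation (P x) (g x))"
    by (intro expectation_prod_Pi_pmf assms(1) measure_pmf.integrable_const_bound[where B="exp l"])
       (use assms(4) in \<open>auto simp: g_def\<close>)
  also have "\<dots> \<le> (\<Prod>x\<in>A. if x \<in> D then exp (r * (exp l - 1)) else 1)"
  proof (intro prod_mono conjI)
    fix x assume "x \<in> A"
    show "0 \<le> measure_pmf.expectation (P x) (g x)"
      by (intro integral_nonneg_AE) (auto simp: g_def)
    show "measure_pmf.expectation (P x) (g x) \<le> (if x \<in> D then exp (r * (exp l - 1)) else 1)"
      using expectation_exp_indicator_le[OF assms(3), of x l] assms(4)
      by (cases "x \<in> D") (auto simp: g_def)
  qed
  also have "\<dots> = exp (real (card D) * r * (exp l - 1))"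
    using assms(1,2)
    by (simp add: prod.If_cases Int_absorb1 exp_of_nat_mult[symmetric] mult.assoc)
  finally show ?thesis
    by (simp add: divide_right_mono exp_diff)
qed

definition IRD_types :: "nat \<Rightarrow> nat pmf \<Rightarrow> (nat \<Rightarrow> nat) pmf" where
  "IRD_types n p = Pi_pmf {1..n} 0 (\<lambda>_. p)"

definition IRD_arcs :: "nat \<Rightarrow> (nat \<Rightarrow> nat \<Rightarrow> real) \<Rightarrow> (nat \<Rightarrow> nat) \<Rightarrow> (nat \<times> nat \<Rightarrow> bool) pmf" where
  "IRD_arcs n \<kappa> T = Pi_pmf {(v, w). v \<in> {1..n} \<and> w \<in> {1..n} \<and> v \<noteq> w} False
     (\<lambda>(v, w). bernoulli_pmf (min (\<kappa> (T v) (T w) / real n) 1))"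

lemma IRD_eq_bind: "IRD n p \<kappa> = IRD_types n p \<bind> (\<lambda>T. map_pmf (Pair T) (IRD_arcs n \<kappa> T))"
  by (simp add: IRD_def IRD_types_def IRD_arcs_def map_pmf_def)

lemma prob_IRD_arc_count_pos_eq_0:
  assumes "pmf p t = 0 \<or> pmf p s = 0"
  shows "measure_pmf.prob (IRD n p \<kappa>) {G. 0 < arc_count n G t s} = 0"
proof -
  have "G \<notin> set_pmf (IRD n p \<kappa>)" if "0 < arc_count n G t s" for G
  proof
    assume "G \<in> set_pmf (IRD n p \<kappa>)"
    then have types: "fst G v \<in> set_pmf p" if "v \<in> {1..n}" for v
      using that by (auto simp: IRD_def set_Pi_pmf PiE_dflt_def)
    from \<open>0 < arc_count n G t s\<close> obtain v w
      where "v \<in> {1..n}" "w \<in> {1..n}" "fst G v = t" "fst G w = s"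
      unfolding arc_count_def by (auto dest!: card_gt_0_iff[THEN iffD1])
    with types assms show False by (auto simp: set_pmf_eq)
  qed
  then show ?thesis by (auto simp: measure_pmf_zero_iff)
qed

lemma prob_type_count_ge_le:
  fixes l c :: real
  assumes "0 < l"
  shows "measure_pmf.prob (IRD_types n p) {T. c \<le> real (card {v\<in>{1..n}. T v = t})}
           \<le> exp (real n * pmf p t * (exp l - 1) - l * c)"
  using prob_Pi_pmf_card_ge_le[of "{1..n}" "{1..n}" "\<lambda>_. p" "\<lambda>y. y = t" "pmf p t" l 0 c] assms
  by (simp add: IRD_types_def measure_pmf_single)

lemma prob_arc_count_ge_given_types_le:
  fixes l c N\<^sub>t N\<^sub>s :: real
  assumes "0 \<le> \<kappa> t s" and "0 < l"
    and "real (card {v\<in>{1..n}. T v = t}) \<le> N\<^sub>t" and "real (card {v\<in>{1..n}. T v = s}) \<le> N\<^sub>s"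
  shows "measure_pmf.prob (IRD_arcs n \<kappa> T) {E. c \<le> real (arc_count n (T, E) t s)}
           \<le> exp (N\<^sub>t * N\<^sub>s * (\<kappa> t s / real n) * (exp l - 1) - l * c)"
proof -
  define D where "D = {(v, w). v \<in> {1..n} \<and> w \<in> {1..n} \<and> v \<noteq> w \<and> T v = t \<and> T w = s}"
  define \<pi> where "\<pi> = min (\<kappa> t s / real n) 1"
  have "D \<subseteq> {v\<in>{1..n}. T v = t} \<times> {v\<in>{1..n}. T v = s}"
    by (auto simp: D_def)
  then have "card D \<le> card ({v\<in>{1..n}. T v = t} \<times> {v\<in>{1..n}. T v = s})"
    by (intro card_mono) auto
  then have "real (card D) \<le> real (card {v\<in>{1..n}. T v = t}) * real (card {v\<in>{1..n}. T v = s})"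
    by (simp add: card_cartesian_product flip: of_nat_mult)
  also have "\<dots> \<le> N\<^sub>t * N\<^sub>s"
    using assms(3,4) by (intro mult_mono) auto
  finally have card_D: "real (card D) \<le> N\<^sub>t * N\<^sub>s" .
  have "{x\<in>D. E x} = {(v, w). v \<in> {1..n} \<and> w \<in> {1..n} \<and> v \<noteq> w \<and>
                         snd (T, E) (v, w) \<and> fst (T, E) v = t \<and> fst (T, E) w = s}" for E
    by (auto simp: D_def)
  then have "measure_pmf.prob (IRD_arcs n \<kappa> T) {E. c \<le> real (arc_count n (T, E) t s)}
             = measure_pmf.prob (IRD_arcs n \<kappa> T) {E. c \<le> real (card {x\<in>D. E x})}"
    by (simp add: arc_count_def)
  also have "\<dots> \<le> exp (real (card D) * \<pi> * (exp l - 1) - l * c)"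
    unfolding IRD_arcs_def
  proof (rule prob_Pi_pmf_card_ge_le[OF _ _ _ assms(2)])
    show "finite {(v, w). v \<in> {1..n} \<and> w \<in> {1..n} \<and> v \<noteq> w}"
      by (rule finite_subset[of _ "{1..n} \<times> {1..n}"]) auto
    fix x assume "x \<in> D"
    then obtain v w where "x = (v, w)" "T v = t" "T w = s"
      by (auto simp: D_def)
    moreover have "{y. y} = {True}"
      by auto
    ultimately show "measure_pmf.prob ((\<lambda>(v, w). bernoulli_pmf (min (\<kappa> (T v) (T w) / real n) 1)) x)
                 {y. y} \<le> \<pi>"
      using assms(1) by (simp add: \<pi>_def measure_pmf_single)
  qed (auto simp: D_def)
  also have "\<dots> \<le> exp (N\<^sub>t * N\<^sub>s * (\<kappa> t s / real n) * (exp l - 1) - l * c)"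
    using card_D assms(1,2)
    by (intro exp_mono diff_right_mono mult_right_mono mult_mono) (auto simp: \<pi>_def)
  finally show ?thesis .
qed

lemma prob_arc_count_ge_le:
  fixes l c N\<^sub>t N\<^sub>s :: real
  assumes "0 \<le> \<kappa> t s" and "0 < l"
  shows "measure_pmf.prob (IRD n p \<kappa>) {G. c \<le> real (arc_count n G t s)}
           \<le> exp (N\<^sub>t * N\<^sub>s * (\<kappa> t s / real n) * (exp l - 1) - l * c)
             + exp (real n * pmf p t * (exp l - 1) - l * N\<^sub>t)
             + exp (real n * pmf p s * (exp l - 1) - l * N\<^sub>s)"
proof -
  define B\<^sub>t where "B\<^sub>t = {T. N\<^sub>t \<le> real (card {v\<in>{1..n}. T v = t})}"
  define B\<^sub>s where "B\<^sub>s = {T. N\<^sub>s \<le> real (card {v\<in>{1..n}. T v = s})}"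
  have "measure_pmf.prob (IRD n p \<kappa>) {G. c \<le> real (arc_count n G t s)}
        \<le> exp (N\<^sub>t * N\<^sub>s * (\<kappa> t s / real n) * (exp l - 1) - l * c)
          + measure_pmf.prob (IRD_types n p) (B\<^sub>t \<union> B\<^sub>s)"
    unfolding IRD_eq_bind
  proof (rule measure_pmf_prob_bind_le)
    fix T assume "T \<notin> B\<^sub>t \<union> B\<^sub>s"
    then have "measure_pmf.prob (IRD_arcs n \<kappa> T) {E. c \<le> real (arc_count n (T, E) t s)}
               \<le> exp (N\<^sub>t * N\<^sub>s * (\<kappa> t s / real n) * (exp l - 1) - l * c)"
      by (intro prob_arc_count_ge_given_types_le assms) (auto simp: B\<^sub>t_def B\<^sub>s_def)
    then show "measure_pmf.prob (map_pmf (Pair T) (IRD_arcs n \<kappa> T)) {G. c \<le> real (arc_count n G t s)}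
               \<le> exp (N\<^sub>t * N\<^sub>s * (\<kappa> t s / real n) * (exp l - 1) - l * c)"
      by (simp add: vimage_def)
  qed simp
  also have "measure_pmf.prob (IRD_types n p) (B\<^sub>t \<union> B\<^sub>s)
             \<le> measure_pmf.prob (IRD_types n p) B\<^sub>t + measure_pmf.prob (IRD_types n p) B\<^sub>s"
    by (rule measure_Un_le) auto
  finally show ?thesis
    using prob_type_count_ge_le[OF assms(2), where c=N\<^sub>t and n=n and p=p and t=t]
      prob_type_count_ge_le[OF assms(2), where c=N\<^sub>s and n=n and p=p and t=s]
    unfolding B\<^sub>t_def B\<^sub>s_def by linarith
qed

lemma exp_inverse_minus_one_le:
  fixes r :: real
  assumes "1 \<le> r"
  shows "exp (1 / r) - 1 \<le> 1 / r + 1 / r\<^sup>2"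
  using exp_bound[of "1 / r"] assms by (simp add: power_divide)

lemma type_count_exponent_le:
  fixes r q y :: real
  assumes "1 \<le> r" and "0 \<le> q" and "q \<le> 1"
  shows "r\<^sup>2 * q * (exp (1 / r) - 1) - 1 / r * (r\<^sup>2 * q + r * y) \<le> 1 - y"
proof -
  have "r\<^sup>2 * q * (exp (1 / r) - 1) \<le> r\<^sup>2 * q * (1 / r + 1 / r\<^sup>2)"
    using assms by (intro mult_left_mono exp_inverse_minus_one_le) auto
  also have "\<dots> - 1 / r * (r\<^sup>2 * q + r * y) = q - y"
    using assms(1) by (simp add: field_simps power2_eq_square)
  finally show ?thesis
    using assms(3) by linarith
qed

lemma arc_count_mean_le:
  fixes r y q\<^sub>t q\<^sub>s w k K C :: real
  assumes r: "1 \<le> r" and y: "1 \<le> y" "y\<^sup>2 \<le> r"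
    and q: "0 \<le> q\<^sub>t" "q\<^sub>t \<le> 1" "0 \<le> q\<^sub>s" "q\<^sub>s \<le> 1"
    and w: "0 < w" "w\<^sup>2 = q\<^sub>t * q\<^sub>s"
    and k: "0 \<le> k" "k \<le> K - C * y\<^sup>2 / (r * w)" and C: "0 \<le> C"
  shows "(r * q\<^sub>t + y) * (r * q\<^sub>s + y) * k * (1 / r + 1 / r\<^sup>2)
         \<le> K * (r * q\<^sub>t * q\<^sub>s) - C * w * y\<^sup>2 + 2 * K * y + 5 * K"
proof -
  define P where "P = (r * q\<^sub>t + y) * (r * q\<^sub>s + y) * k"
  have r0: "0 < r"
    using r by simp
  have "0 \<le> C * y\<^sup>2 / (r * w)"
    using C r0 w by simp
  then have kK: "k \<le> K"
    using k by linarith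
  have "y \<le> y\<^sup>2"
    using mult_right_mono[of 1 y y] y by (simp add: power2_eq_square)
  then have "y / r \<le> 1"
    using y r0 by simp
  then have yr: "0 \<le> y / r" "q\<^sub>t + y / r \<le> 2" "q\<^sub>s + y / r \<le> 2"
    using y r0 q by (simp, linarith, linarith)
  have "P * (1 / r) = k * (r * q\<^sub>t * q\<^sub>s) + k * y * (q\<^sub>t + q\<^sub>s) + k * (y\<^sup>2 / r)"
    using r0 by (simp add: P_def field_simps power2_eq_square)
  moreover have "k * (r * q\<^sub>t * q\<^sub>s) \<le> (K - C * y\<^sup>2 / (r * w)) * (r * q\<^sub>t * q\<^sub>s)"
    using k q r0 by (intro mult_right_mono) auto
  moreover have "(K - C * y\<^sup>2 / (r * w)) * (r * q\<^sub>t * q\<^sub>s) = K * (r * q\<^sub>t * q\<^sub>s) - C * w * y\<^sup>2"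
    using r0 w by (simp add: field_simps power2_eq_square)
  moreover have "k * y * (q\<^sub>t + q\<^sub>s) \<le> K * y * 2"
    using kK k y q by (intro mult_mono) auto
  moreover have "k * (y\<^sup>2 / r) \<le> K"
    using k kK y r0 by (metis divide_le_eq_1_pos mult_left_le order_trans)
  moreover have "P * (1 / r\<^sup>2) = k * ((q\<^sub>t + y / r) * (q\<^sub>s + y / r))"
    using r0 by (simp add: P_def field_simps power2_eq_square)
  moreover have "k * ((q\<^sub>t + y / r) * (q\<^sub>s + y / r)) \<le> K * (2 * 2)"
    using k kK q yr by (intro mult_mono) auto
  moreover have "P * (1 / r + 1 / r\<^sup>2) = P * (1 / r) + P * (1 / r\<^sup>2)"
    by (simp add: distrib_left)
  ultimately show ?thesis
    unfolding P_def[symmetric] by linarith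
qed

lemma arc_count_exponent_le:
  fixes r y q\<^sub>t q\<^sub>s w k K C :: real
  assumes r: "1 \<le> r" and y: "1 \<le> y" "y\<^sup>2 \<le> r"
    and q: "0 \<le> q\<^sub>t" "q\<^sub>t \<le> 1" "0 \<le> q\<^sub>s" "q\<^sub>s \<le> 1"
    and w: "0 < w" "w\<^sup>2 = q\<^sub>t * q\<^sub>s"
    and k: "0 \<le> k" "k \<le> K - C * y\<^sup>2 / (r * w)" and C: "0 \<le> C"
  shows "(r\<^sup>2 * q\<^sub>t + r * y) * (r\<^sup>2 * q\<^sub>s + r * y) * (k / r\<^sup>2) * (exp (1 / r) - 1)
           - 1 / r * (r\<^sup>2 * q\<^sub>t * q\<^sub>s * K)
         \<le> - C * w * y\<^sup>2 + 2 * K * y + 5 * K"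
proof -
  define P where "P = (r * q\<^sub>t + y) * (r * q\<^sub>s + y) * k"
  have "(r\<^sup>2 * q\<^sub>t + r * y) * (r\<^sup>2 * q\<^sub>s + r * y) * (k / r\<^sup>2) * (exp (1 / r) - 1)
          - 1 / r * (r\<^sup>2 * q\<^sub>t * q\<^sub>s * K)
        = P * (exp (1 / r) - 1) - K * (r * q\<^sub>t * q\<^sub>s)"
    using r by (simp add: P_def field_simps power2_eq_square)
  also have "\<dots> \<le> P * (1 / r + 1 / r\<^sup>2) - K * (r * q\<^sub>t * q\<^sub>s)"
    using r q y k by (intro diff_right_mono mult_left_mono exp_inverse_minus_one_le r) (simp add: P_def)
  also have "\<dots> \<le> - C * w * y\<^sup>2 + 2 * K * y + 5 * K"
    using arc_count_mean_le[OF assms] by (simp add: P_def)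
  finally show ?thesis .
qed

lemma prob_arc_count_ge_mean_le:
  fixes \<alpha> C K :: real
  assumes n: "1 \<le> n" and \<alpha>: "0 < \<alpha>" "\<alpha> < 1/2" and C: "0 \<le> C"
    and q: "0 < pmf p t" "0 < pmf p s"
    and \<kappa>: "0 \<le> \<kappa> t s" "\<kappa> t s \<le> K - C * real n powr (-1/2 + \<alpha>) / sqrt (pmf p t * pmf p s)"
  shows "measure_pmf.prob (IRD n p \<kappa>) {G. real n * pmf p t * pmf p s * K \<le> real (arc_count n G t s)}
           \<le> exp (- C * sqrt (pmf p t * pmf p s) * real n powr \<alpha> + 2 * K * real n powr (\<alpha>/2) + 5 * K)
             + 2 * exp (1 - real n powr (\<alpha>/2))"
proof -
  define r where "r = sqrt (real n)"
  define y where "y = real n powr (\<alpha>/2)"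
  have n_eq: "real n = r\<^sup>2" and r: "1 \<le> r"
    using n by (simp_all add: r_def)
  have y_sq: "y\<^sup>2 = real n powr \<alpha>"
    by (simp add: y_def power2_eq_square flip: powr_add)
  have "real n powr \<alpha> \<le> real n powr (1/2)"
    using n \<alpha> by (intro powr_mono) auto
  then have y: "1 \<le> y" "y\<^sup>2 \<le> r"
    using n \<alpha> by (simp_all only: y_sq) (simp_all add: y_def r_def powr_half_sqrt ge_one_powr_ge_zero)
  have "real n powr (-1/2 + \<alpha>) = real n powr \<alpha> / real n powr (1/2)"
    by (simp add: powr_diff[symmetric])
  then have "real n powr (-1/2 + \<alpha>) = y\<^sup>2 / r"
    using n by (simp add: y_sq r_def powr_half_sqrt)
  then have \<kappa>_le: "\<kappa> t s \<le> K - C * y\<^sup>2 / (r * sqrt (pmf p t * pmf p s))"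
    using \<kappa>(2) by (simp add: field_simps)
  have "measure_pmf.prob (IRD n p \<kappa>) {G. real n * pmf p t * pmf p s * K \<le> real (arc_count n G t s)}
        \<le> exp ((real n * pmf p t + r * y) * (real n * pmf p s + r * y) * (\<kappa> t s / real n)
                 * (exp (1 / r) - 1) - 1 / r * (real n * pmf p t * pmf p s * K))
          + exp (real n * pmf p t * (exp (1 / r) - 1) - 1 / r * (real n * pmf p t + r * y))
          + exp (real n * pmf p s * (exp (1 / r) - 1) - 1 / r * (real n * pmf p s + r * y))"
    using r by (intro prob_arc_count_ge_le \<kappa>(1)) simp
  also have "\<dots> \<le> exp (- C * sqrt (pmf p t * pmf p s) * y\<^sup>2 + 2 * K * y + 5 * K)
                  + exp (1 - y) + exp (1 - y)"
    unfolding n_eq using r y q C \<kappa>(1) \<kappa>_le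
    by (intro add_mono exp_mono arc_count_exponent_le type_count_exponent_le)
       (auto simp: pmf_le_1)
  finally show ?thesis
    by (simp only: y_sq) (simp add: y_def)
qed

lemma eventually_prob_arc_count_ge_mean_le:
  fixes \<alpha> C K :: real and \<kappa> :: "nat \<Rightarrow> nat \<Rightarrow> nat \<Rightarrow> real"
  assumes \<alpha>: "0 < \<alpha>" "\<alpha> < 1/2" and C: "0 < C"
    and q: "0 < pmf p t" "0 < pmf p s"
    and \<kappa>: "\<And>n. 0 \<le> \<kappa> n t s"
      "\<And>n. \<kappa> n t s \<le> K - C * real n powr (-1/2 + \<alpha>) / sqrt (pmf p t * pmf p s)"
  shows "\<forall>\<^sub>F n in sequentially.
           measure_pmf.prob (IRD n p (\<kappa> n))
             {G. real n * pmf p t * pmf p s * K \<le> real (arc_count n G t s)}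
           \<le> 2 * exp (- ((ln (real n)) ^ 2) / 2)"
proof -
  have "\<forall>\<^sub>F x in at_top.
          exp (- C * sqrt (pmf p t * pmf p s) * x powr \<alpha> + 2 * K * x powr (\<alpha>/2) + 5 * K)
            + 2 * exp (1 - x powr (\<alpha>/2))
          \<le> 2 * exp (- ((ln x) ^ 2) / 2)"
    using \<alpha> C q by real_asymp
  from eventually_compose_filterlim[OF this filterlim_real_sequentially]
    and eventually_ge_at_top[of 1]
  show ?thesis
  proof eventually_elim
    case (elim n)
    show ?case
      by (rule order_trans[OF prob_arc_count_ge_mean_le]) (use elim \<alpha> C q \<kappa> in auto)
  qed
qed

theorem lemma4:
  fixes p :: "nat pmf" and S :: "nat set" and \<delta> \<tau> \<alpha> C :: real
    and \<kappa> :: "nat \<Rightarrow> nat \<Rightarrow> real" and \<kappa>' :: "nat \<Rightarrow> nat \<Rightarrow> nat \<Rightarrow> real"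
    and t s :: nat
  assumes values_S: "set_pmf p \<subseteq> S"
    and delta_pos: "\<delta> > 0"
    and moment: "integrable (measure_pmf p) (\<lambda>x. real x powr \<delta>)"
    and tau: "0 < \<tau>" "\<tau> < 1"
    and kappa_nonneg: "\<And>x y. x \<in> S \<Longrightarrow> y \<in> S \<Longrightarrow> \<kappa> x y \<ge> 0"
    and kappa'_nonneg: "\<And>n x y. x \<in> S \<Longrightarrow> y \<in> S \<Longrightarrow> \<kappa>' n x y \<ge> 0"
    and ts: "t \<in> S" "s \<in> S"
    and alpha: "1/2 - \<tau>/2 < \<alpha>" "\<alpha> < 1/2"
    and C_pos: "C > 0"
    and kappa'_le: "\<And>n. \<kappa>' n t s \<le> \<kappa> t s - C * real n powr (-1/2 + \<alpha>) / sqrt (pmf p t * pmf p s)"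
  shows "\<forall>\<^sub>F n in sequentially.
           stable p \<tau> n t \<and> stable p \<tau> n s \<longrightarrow>
           measure_pmf.prob (IRD n p (\<kappa>' n))
             {G. real (arc_count n G t s) > of_int \<lfloor>real n * pmf p t * pmf p s * \<kappa> t s\<rfloor>}
           \<le> 2 * exp (- ((ln (real n)) ^ 2) / 2)"
proof (cases "pmf p t = 0 \<or> pmf p s = 0")
  case True
  then show ?thesis
    by (intro always_eventually allI impI) (auto simp: prob_IRD_arc_count_pos_eq_0)
next
  case False
  then have "0 < pmf p t" "0 < pmf p s"
    using pmf_nonneg[of p t] pmf_nonneg[of p s] by linarith+
  moreover have "0 < \<alpha>"
    using alpha tau by linarith
  ultimately have "\<forall>\<^sub>F n in sequentially.
      measure_pmf.prob (IRD n p (\<kappa>' n))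
        {G. real n * pmf p t * pmf p s * \<kappa> t s \<le> real (arc_count n G t s)}
      \<le> 2 * exp (- ((ln (real n)) ^ 2) / 2)"
    using alpha(2) C_pos kappa'_nonneg[OF ts] kappa'_le
    by (intro eventually_prob_arc_count_ge_mean_le[where C=C]) auto
  moreover have "c \<le> real m" if "of_int \<lfloor>c\<rfloor> < real m" for c m
    using that by (metis floor_less_iff less_imp_le of_int_less_iff of_int_of_nat_eq)
  then have "measure_pmf.prob (IRD n p (\<kappa>' n))
               {G. real (arc_count n G t s) > of_int \<lfloor>real n * pmf p t * pmf p s * \<kappa> t s\<rfloor>}
             \<le> measure_pmf.prob (IRD n p (\<kappa>' n))
               {G. real n * pmf p t * pmf p s * \<kappa> t s \<le> real (arc_count n G t s)}" for n
    by (intro measure_pmf.finite_measure_mono) auto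
  ultimately show ?thesis
    by (elim eventually_mono) (blast intro: order_trans)
qed

end
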